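(* Let $\varphi : X \to Y$ be a morphism in $\mathscr{C}$ with kernel $\kappa : K\to X$. Then $\varphi$ is $\{1,3\}$-invertible if and only if $\varphi$ is regular and $\kappa\kappa^{*} : K\to K$ is invertible. In this case, for every $\psi : Y\to X$ with $\varphi\psi\varphi=\varphi$, $$\psi\,[1_X-\kappa^{*}(\kappa\kappa^{*})^{-1}\kappa]$$ is a $\{1,3\}$-inverse of $\varphi$.
   Context: $\mathscr{C}$ is an additive category with an involution $*$: a map on morphisms sending $\varphi : X\to Y$ to $\varphi^* : Y \to X$ such that $(\varphi^* )^*=\varphi$, $(\varphi\psi)^*=\psi^*\varphi^*$ and $(\varphi+\phi)^*=\varphi^*+\phi^*$. Composition is written left to right: for $\varphi : X\to Y$ and $\psi : Y\to Z$, $\varphi\psi : X \to Z$ means "first $\varphi$, then $\psi$". A kernel of $\varphi : X\to Y$ is a morphism $\kappa : K\to X$ with $\kappa\varphi=0$ such that every $\alpha : M\to X$ with $\alpha\varphi=0$ factors uniquely as $\alpha=\alpha'\kappa$. $\varphi$ is regular if there is $\chi : Y\to X$ with $\varphi\chi\varphi=\varphi$. A $\{1,3\}$-inverse of $\varphi$ is a morphism $\chi : Y\to X$ with $\varphi\chi\varphi=\varphi$ and $(\varphi\chi)^*=\varphi\chi$. A morphism is invertible if it has a two-sided inverse. *)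

theory Defs
  imports Main
begin

text \<open>An additive category with involution, given explicitly by hom-sets.
  Composition cmp is written diagrammatically: cmp f g = "first f, then g".\<close>

locale additive_inv_cat =
  fixes hom :: "'o \<Rightarrow> 'o \<Rightarrow> 'm set"
    and cmp :: "'m \<Rightarrow> 'm \<Rightarrow> 'm"
    and idm :: "'o \<Rightarrow> 'm"
    and zer :: "'o \<Rightarrow> 'o \<Rightarrow> 'm"
    and add :: "'m \<Rightarrow> 'm \<Rightarrow> 'm"
    and neg :: "'m \<Rightarrow> 'm"
    and star :: "'m \<Rightarrow> 'm"
  assumes hom_disjoint: "\<And>f X Y X' Y'. f \<in> hom X Y \<Longrightarrow> f \<in> hom X' Y' \<Longrightarrow> X = X' \<and> Y = Y'"
    and cmp_closed: "\<And>f g X Y Z. f \<in> hom X Y \<Longrightarrow> g \<in> hom Y Z \<Longrightarrow> cmp f g \<in> hom X Z"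
    and cmp_assoc: "\<And>f g h W X Y Z. f \<in> hom W X \<Longrightarrow> g \<in> hom X Y \<Longrightarrow> h \<in> hom Y Z \<Longrightarrow>
                     cmp (cmp f g) h = cmp f (cmp g h)"
    and idm_closed: "\<And>X. idm X \<in> hom X X"
    and idm_left: "\<And>f X Y. f \<in> hom X Y \<Longrightarrow> cmp (idm X) f = f"
    and idm_right: "\<And>f X Y. f \<in> hom X Y \<Longrightarrow> cmp f (idm Y) = f"
    and zer_closed: "\<And>X Y. zer X Y \<in> hom X Y"
    and add_closed: "\<And>f g X Y. f \<in> hom X Y \<Longrightarrow> g \<in> hom X Y \<Longrightarrow> add f g \<in> hom X Y"
    and neg_closed: "\<And>f X Y. f \<in> hom X Y \<Longrightarrow> neg f \<in> hom X Y"
    and add_assoc: "\<And>f g h X Y. f \<in> hom X Y \<Longrightarrow> g \<in> hom X Y \<Longrightarrow> h \<in> hom X Y \<Longrightarrow>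
                     add (add f g) h = add f (add g h)"
    and add_comm: "\<And>f g X Y. f \<in> hom X Y \<Longrightarrow> g \<in> hom X Y \<Longrightarrow> add f g = add g f"
    and add_zer: "\<And>f X Y. f \<in> hom X Y \<Longrightarrow> add f (zer X Y) = f"
    and add_neg: "\<And>f X Y. f \<in> hom X Y \<Longrightarrow> add f (neg f) = zer X Y"
    and cmp_add_left: "\<And>f g h X Y Z. f \<in> hom X Y \<Longrightarrow> g \<in> hom X Y \<Longrightarrow> h \<in> hom Y Z \<Longrightarrow>
                     cmp (add f g) h = add (cmp f h) (cmp g h)"
    and cmp_add_right: "\<And>f g h X Y Z. f \<in> hom X Y \<Longrightarrow> g \<in> hom Y Z \<Longrightarrow> h \<in> hom Y Z \<Longrightarrow>
                     cmp f (add g h) = add (cmp f g) (cmp f h)"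
    and zero_object: "\<exists>Z. \<forall>X. hom Z X = {zer Z X} \<and> hom X Z = {zer X Z}"
    and biproducts: "\<And>X Y. \<exists>S i1 i2 p1 p2. i1 \<in> hom X S \<and> i2 \<in> hom Y S \<and> p1 \<in> hom S X \<and> p2 \<in> hom S Y
                     \<and> cmp i1 p1 = idm X \<and> cmp i2 p2 = idm Y \<and> cmp i1 p2 = zer X Y \<and> cmp i2 p1 = zer Y X
                     \<and> add (cmp p1 i1) (cmp p2 i2) = idm S"
    and inv_closed: "\<And>f X Y. f \<in> hom X Y \<Longrightarrow> star f \<in> hom Y X"
    and inv_inv: "\<And>f X Y. f \<in> hom X Y \<Longrightarrow> star (star f) = f"
    and inv_cmp: "\<And>f g X Y Z. f \<in> hom X Y \<Longrightarrow> g \<in> hom Y Z \<Longrightarrow> star (cmp f g) = cmp (star g) (star f)"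
    and inv_add: "\<And>f g X Y. f \<in> hom X Y \<Longrightarrow> g \<in> hom X Y \<Longrightarrow> star (add f g) = add (star f) (star g)"

definition is_kernel ::
  "('o \<Rightarrow> 'o \<Rightarrow> 'm set) \<Rightarrow> ('m \<Rightarrow> 'm \<Rightarrow> 'm) \<Rightarrow> ('o \<Rightarrow> 'o \<Rightarrow> 'm) \<Rightarrow> 'm \<Rightarrow> 'o \<Rightarrow> 'o \<Rightarrow> 'm \<Rightarrow> 'o \<Rightarrow> bool"
  where "is_kernel hom cmp zer phi X Y kappa K \<longleftrightarrow>
     kappa \<in> hom K X \<and> cmp kappa phi = zer K Y \<and>
     (\<forall>M alpha. alpha \<in> hom M X \<and> cmp alpha phi = zer M Y \<longrightarrow>
        (\<exists>!alpha'. alpha' \<in> hom M K \<and> alpha = cmp alpha' kappa))"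

definition regular_mor ::
  "('o \<Rightarrow> 'o \<Rightarrow> 'm set) \<Rightarrow> ('m \<Rightarrow> 'm \<Rightarrow> 'm) \<Rightarrow> 'm \<Rightarrow> 'o \<Rightarrow> 'o \<Rightarrow> bool"
  where "regular_mor hom cmp phi X Y \<longleftrightarrow> (\<exists>chi \<in> hom Y X. cmp (cmp phi chi) phi = phi)"

definition inverse13 ::
  "('o \<Rightarrow> 'o \<Rightarrow> 'm set) \<Rightarrow> ('m \<Rightarrow> 'm \<Rightarrow> 'm) \<Rightarrow> ('m \<Rightarrow> 'm) \<Rightarrow> 'm \<Rightarrow> 'o \<Rightarrow> 'o \<Rightarrow> 'm \<Rightarrow> bool"
  where "inverse13 hom cmp star phi X Y chi \<longleftrightarrow>
     chi \<in> hom Y X \<and> cmp (cmp phi chi) phi = phi \<and> star (cmp phi chi) = cmp phi chi"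

definition invertible_mor ::
  "('o \<Rightarrow> 'o \<Rightarrow> 'm set) \<Rightarrow> ('m \<Rightarrow> 'm \<Rightarrow> 'm) \<Rightarrow> ('o \<Rightarrow> 'm) \<Rightarrow> 'm \<Rightarrow> 'o \<Rightarrow> 'o \<Rightarrow> bool"
  where "invertible_mor hom cmp idm f X Y \<longleftrightarrow>
     (\<exists>g \<in> hom Y X. cmp f g = idm X \<and> cmp g f = idm Y)"

end

theory Submission imports Defs begin

text \<open>Both directions rest on one observation: if \<open>\<phi>\<psi>\<phi> = \<phi>\<close>, then \<open>1 - \<phi>\<psi>\<close> kills \<open>\<phi>\<close>, so it
  factors as \<open>r\<kappa>\<close> through the kernel, and \<open>\<kappa>r = 1\<close> because \<open>\<kappa>\<phi> = 0\<close> and \<open>\<kappa>\<close> is monic.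
  If \<open>\<phi>\<psi>\<close> is self-adjoint, then so is \<open>r\<kappa>\<close>, and \<open>r\<^sup>*r\<close> inverts \<open>\<kappa>\<kappa>\<^sup>*\<close>. Conversely, if
  \<open>g\<close> inverts \<open>\<kappa>\<kappa>\<^sup>*\<close>, then \<open>Q = 1 - \<kappa>\<^sup>*g\<kappa>\<close> is self-adjoint with \<open>\<kappa>Q = 0\<close> and \<open>Q\<phi> = \<phi>\<close>;
  from \<open>\<kappa>Q = 0\<close> we get \<open>(1 - \<phi>\<psi>)Q = r\<kappa>Q = 0\<close>, i.e. \<open>\<phi>\<psi>Q = Q\<close>, so \<open>\<psi>Q\<close> is a \<open>{1,3}\<close>-inverse.\<close>

context additive_inv_cat
begin

lemma add_zer_left: "f \<in> hom X Y \<Longrightarrow> add (zer X Y) f = f"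
  using add_comm[OF zer_closed, of f X Y] add_zer[of f X Y] by simp

lemma add_left_cancel:
  assumes a: "a \<in> hom X Y" and b: "b \<in> hom X Y" and c: "c \<in> hom X Y" and eq: "add a b = add a c"
  shows "b = c"
proof -
  have na: "neg a \<in> hom X Y" using neg_closed[OF a] .
  have z: "add (neg a) a = zer X Y" using add_comm[OF na a] add_neg[OF a] by simp
  have "b = add (add (neg a) a) b" using z add_zer_left[OF b] by simp
  also have "\<dots> = add (neg a) (add a c)" using add_assoc[OF na a b] eq by simp
  also have "\<dots> = add (add (neg a) a) c" using add_assoc[OF na a c] by simp
  also have "\<dots> = c" using z add_zer_left[OF c] by simp
  finally show ?thesis .
qed

lemma eq_if_diff_eq_zer:
  assumes a: "a \<in> hom X Y" and b: "b \<in> hom X Y" and eq: "add a (neg b) = zer X Y"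
  shows "a = b"
proof -
  have nb: "neg b \<in> hom X Y" using neg_closed[OF b] .
  have "add (neg b) a = add (neg b) b"
    using add_comm[OF nb a] add_comm[OF nb b] eq add_neg[OF b] by simp
  thus ?thesis using add_left_cancel[OF nb a b] by simp
qed

lemma eq_zer_if_add_self:
  assumes f: "f \<in> hom X Y" and eq: "add f f = f"
  shows "f = zer X Y"
  using add_left_cancel[OF f f zer_closed] eq add_zer[OF f] by simp

lemma cmp_zer_right:
  assumes f: "f \<in> hom X Y" shows "cmp f (zer Y Z) = zer X Z"
  by (rule eq_zer_if_add_self[OF cmp_closed[OF f zer_closed]])
    (simp add: cmp_add_right[OF f zer_closed zer_closed, symmetric] add_zer[OF zer_closed])

lemma cmp_zer_left:
  assumes f: "f \<in> hom Y Z" shows "cmp (zer X Y) f = zer X Z"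
  by (rule eq_zer_if_add_self[OF cmp_closed[OF zer_closed f]])
    (simp add: cmp_add_left[OF zer_closed zer_closed f, symmetric] add_zer[OF zer_closed])

lemma star_zer: "star (zer X Y) = zer Y X"
  by (rule eq_zer_if_add_self[OF inv_closed[OF zer_closed]])
    (simp add: inv_add[OF zer_closed zer_closed, symmetric] add_zer[OF zer_closed])

lemma neg_zer: "neg (zer X Y) = zer X Y"
  using add_zer_left[OF neg_closed[OF zer_closed]] add_neg[OF zer_closed, of X Y] by simp

lemma neg_unique:
  assumes f: "f \<in> hom X Y" and h: "h \<in> hom X Y" and eq: "add f h = zer X Y"
  shows "h = neg f"
  using add_left_cancel[OF f h neg_closed[OF f]] eq add_neg[OF f] by simp

lemma cmp_neg_right:
  assumes f: "f \<in> hom X Y" and g: "g \<in> hom Y Z" shows "cmp f (neg g) = neg (cmp f g)"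
  using neg_unique[OF cmp_closed[OF f g] cmp_closed[OF f neg_closed[OF g]]]
    cmp_add_right[OF f g neg_closed[OF g]] add_neg[OF g] cmp_zer_right[OF f] by simp

lemma cmp_neg_left:
  assumes f: "f \<in> hom X Y" and g: "g \<in> hom Y Z" shows "cmp (neg f) g = neg (cmp f g)"
  using neg_unique[OF cmp_closed[OF f g] cmp_closed[OF neg_closed[OF f] g]]
    cmp_add_left[OF f neg_closed[OF f] g] add_neg[OF f] cmp_zer_left[OF g] by simp

lemma star_neg:
  assumes f: "f \<in> hom X Y" shows "star (neg f) = neg (star f)"
  using neg_unique[OF inv_closed[OF f] inv_closed[OF neg_closed[OF f]]]
    inv_add[OF f neg_closed[OF f]] add_neg[OF f] star_zer by simp

lemma star_idm: "star (idm X) = idm X"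
  using inv_cmp[OF idm_closed inv_closed[OF idm_closed]] idm_left[OF inv_closed[OF idm_closed]]
    inv_inv[OF idm_closed] by simp

lemma star_cmp_self_star:
  assumes f: "f \<in> hom X Y" shows "star (cmp f (star f)) = cmp f (star f)"
  using inv_cmp[OF f inv_closed[OF f]] inv_inv[OF f] by simp

lemma cmp_one_minus_left:
  assumes a: "a \<in> hom X X" and b: "b \<in> hom X Y"
  shows "cmp (add (idm X) (neg a)) b = add b (neg (cmp a b))"
  using cmp_add_left[OF idm_closed neg_closed[OF a] b] idm_left[OF b] cmp_neg_left[OF a b] by simp

lemma cmp_one_minus_right:
  assumes a: "a \<in> hom X X" and b: "b \<in> hom Y X"
  shows "cmp b (add (idm X) (neg a)) = add b (neg (cmp b a))"
  using cmp_add_right[OF b idm_closed neg_closed[OF a]] idm_right[OF b] cmp_neg_right[OF b a] by simp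

lemma one_minus_closed: "a \<in> hom X X \<Longrightarrow> add (idm X) (neg a) \<in> hom X X"
  by (simp add: add_closed idm_closed neg_closed)

lemma star_one_minus:
  assumes a: "a \<in> hom X X" and sa: "star a = a"
  shows "star (add (idm X) (neg a)) = add (idm X) (neg a)"
  using inv_add[OF idm_closed neg_closed[OF a]] star_idm star_neg[OF a] sa by simp

lemma inverse_unique:
  assumes m: "m \<in> hom K L" and g: "g \<in> hom L K" and h: "h \<in> hom L K"
    and mg: "cmp m g = idm K" and hm: "cmp h m = idm L"
  shows "g = h"
  using cmp_assoc[OF h m g] mg hm idm_left[OF g] idm_right[OF h] by simp

lemma star_inverse_of_self_adjoint:
  assumes m: "m \<in> hom K K" "star m = m" and g: "g \<in> hom K K"
    and mg: "cmp m g = idm K" and gm: "cmp g m = idm K"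
  shows "star g = g"
proof -
  have "cmp (star g) m = idm K" using inv_cmp[OF m(1) g] mg m(2) star_idm by simp
  thus ?thesis using inverse_unique[OF m(1) g inv_closed[OF g] mg] by simp
qed

lemma kernel_hom: "is_kernel hom cmp zer phi X Y k K \<Longrightarrow> k \<in> hom K X"
  and kernel_cmp: "is_kernel hom cmp zer phi X Y k K \<Longrightarrow> cmp k phi = zer K Y"
  unfolding is_kernel_def by auto

lemma kernel_factor:
  assumes "is_kernel hom cmp zer phi X Y k K" "a \<in> hom M X" "cmp a phi = zer M Y"
  obtains r where "r \<in> hom M K" "a = cmp r k"
  using assms unfolding is_kernel_def by blast

lemma kernel_cancel:
  assumes ker: "is_kernel hom cmp zer phi X Y k K" and phi: "phi \<in> hom X Y"
    and a: "a \<in> hom M K" and b: "b \<in> hom M K" and eq: "cmp a k = cmp b k"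
  shows "a = b"
proof -
  have k: "k \<in> hom K X" using kernel_hom[OF ker] .
  have "cmp (cmp a k) phi = zer M Y"
    using cmp_assoc[OF a k phi] kernel_cmp[OF ker] cmp_zer_right[OF a] by simp
  then have "\<exists>!a'. a' \<in> hom M K \<and> cmp a k = cmp a' k"
    using ker cmp_closed[OF a k] unfolding is_kernel_def by blast
  thus ?thesis using a b eq by blast
qed

lemma one_minus_regular_factors_through_kernel:
  assumes phi: "phi \<in> hom X Y" and ker: "is_kernel hom cmp zer phi X Y k K"
    and psi: "psi \<in> hom Y X" "cmp (cmp phi psi) phi = phi"
  obtains r where "r \<in> hom X K" "add (idm X) (neg (cmp phi psi)) = cmp r k" "cmp k r = idm K"
proof -
  have k: "k \<in> hom K X" using kernel_hom[OF ker] .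
  have E: "cmp phi psi \<in> hom X X" using cmp_closed[OF phi psi(1)] .
  have "cmp (add (idm X) (neg (cmp phi psi))) phi = zer X Y"
    using cmp_one_minus_left[OF E phi] psi(2) add_neg[OF phi] by simp
  then obtain r where r: "r \<in> hom X K" and R: "add (idm X) (neg (cmp phi psi)) = cmp r k"
    using kernel_factor[OF ker one_minus_closed[OF E]] by blast
  have "cmp k (cmp phi psi) = zer K X"
    using cmp_assoc[OF k phi psi(1)] kernel_cmp[OF ker] cmp_zer_left[OF psi(1)] by simp
  then have "cmp k (cmp r k) = k"
    using cmp_one_minus_right[OF E k] R neg_zer add_zer[OF k] by simp
  then have "cmp (cmp k r) k = cmp (idm K) k"
    using cmp_assoc[OF k r k] idm_left[OF k] by simp
  then have "cmp k r = idm K"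
    using kernel_cancel[OF ker phi cmp_closed[OF k r] idm_closed] by simp
  with r R show ?thesis by (rule that)
qed

lemma invertible_kernel_gram_if_inverse13:
  assumes phi: "phi \<in> hom X Y" and ker: "is_kernel hom cmp zer phi X Y k K"
    and chi: "inverse13 hom cmp star phi X Y chi"
  shows "invertible_mor hom cmp idm (cmp k (star k)) K K"
proof -
  have k: "k \<in> hom K X" using kernel_hom[OF ker] .
  have ks: "star k \<in> hom X K" using inv_closed[OF k] .
  have chi': "chi \<in> hom Y X" "cmp (cmp phi chi) phi = phi" "star (cmp phi chi) = cmp phi chi"
    using chi unfolding inverse13_def by auto
  obtain r where r: "r \<in> hom X K" and R: "add (idm X) (neg (cmp phi chi)) = cmp r k"
    and kr: "cmp k r = idm K"
    using one_minus_regular_factors_through_kernel[OF phi ker chi'(1,2)] by blast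
  have rs: "star r \<in> hom K X" using inv_closed[OF r] .
  have rk_sa: "cmp (star k) (star r) = cmp r k"
    using star_one_minus[OF cmp_closed[OF phi chi'(1)] chi'(3)] R inv_cmp[OF r k] by simp
  have krs: "cmp (star r) (star k) = idm K" using inv_cmp[OF k r] kr star_idm by simp
  have "cmp (cmp k (star k)) (cmp (star r) r) = cmp (cmp k (cmp (star k) (star r))) r"
    using cmp_assoc[OF k ks cmp_closed[OF rs r]] cmp_assoc[OF ks rs r]
      cmp_assoc[OF k cmp_closed[OF ks rs] r] by simp
  also have "\<dots> = cmp (cmp (cmp k r) k) r" using rk_sa cmp_assoc[OF k r k] by simp
  also have "\<dots> = idm K" using kr idm_left[OF k] by simp
  finally have left: "cmp (cmp k (star k)) (cmp (star r) r) = idm K" .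
  have "cmp (cmp (star r) r) (cmp k (star k)) = cmp (star r) (cmp (cmp r k) (star k))"
    using cmp_assoc[OF rs r cmp_closed[OF k ks]] cmp_assoc[OF r k ks] by simp
  also have "\<dots> = cmp (cmp (star r) (star k)) (cmp (star r) (star k))"
    using rk_sa[symmetric] cmp_assoc[OF ks rs ks] cmp_assoc[OF rs ks cmp_closed[OF rs ks]] by simp
  also have "\<dots> = idm K" using krs idm_left[OF idm_closed] by simp
  finally have right: "cmp (cmp (star r) r) (cmp k (star k)) = idm K" .
  show ?thesis
    unfolding invertible_mor_def using cmp_closed[OF rs r] left right by blast
qed

lemma inverse13_from_regular_inverse:
  assumes phi: "phi \<in> hom X Y" and ker: "is_kernel hom cmp zer phi X Y k K"
    and psi: "psi \<in> hom Y X" "cmp (cmp phi psi) phi = phi"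
    and g: "g \<in> hom K K" "cmp (cmp k (star k)) g = idm K" "cmp g (cmp k (star k)) = idm K"
  shows "inverse13 hom cmp star phi X Y (cmp psi (add (idm X) (neg (cmp (cmp (star k) g) k))))"
proof -
  have k: "k \<in> hom K X" using kernel_hom[OF ker] .
  have ks: "star k \<in> hom X K" using inv_closed[OF k] .
  have ksg: "cmp (star k) g \<in> hom X K" using cmp_closed[OF ks g(1)] .
  define P where "P = cmp (cmp (star k) g) k"
  define Q where "Q = add (idm X) (neg P)"
  have P: "P \<in> hom X X" unfolding P_def using cmp_closed[OF ksg k] .
  have Q: "Q \<in> hom X X" unfolding Q_def using one_minus_closed[OF P] .
  have E: "cmp phi psi \<in> hom X X" using cmp_closed[OF phi psi(1)] .
  have "star g = g"
    using star_inverse_of_self_adjoint[OF cmp_closed[OF k ks] star_cmp_self_star[OF k] g] .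
  then have "star P = P"
    unfolding P_def using inv_cmp[OF ksg k] inv_cmp[OF ks g(1)] inv_inv[OF k]
      cmp_assoc[OF ks g(1) k] by simp
  then have Q_sa: "star Q = Q" unfolding Q_def using star_one_minus[OF P] by simp
  have "cmp P phi = zer X Y"
    unfolding P_def using cmp_assoc[OF ksg k phi] kernel_cmp[OF ker] cmp_zer_right[OF ksg] by simp
  then have Q_phi: "cmp Q phi = phi"
    unfolding Q_def using cmp_one_minus_left[OF P phi] neg_zer add_zer[OF phi] by simp
  have "cmp k P = k"
    unfolding P_def using cmp_assoc[OF k ksg k] cmp_assoc[OF k ks g(1)] g(2) idm_left[OF k] by simp
  then have k_Q: "cmp k Q = zer K X"
    unfolding Q_def using cmp_one_minus_right[OF P k] add_neg[OF k] by simp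
  obtain r where r: "r \<in> hom X K" and R: "add (idm X) (neg (cmp phi psi)) = cmp r k"
    using one_minus_regular_factors_through_kernel[OF phi ker psi] by blast
  have "add Q (neg (cmp (cmp phi psi) Q)) = zer X X"
    using cmp_one_minus_left[OF E Q] R cmp_assoc[OF r k Q] k_Q cmp_zer_right[OF r] by simp
  then have phi_psi_Q: "cmp (cmp phi psi) Q = Q"
    using eq_if_diff_eq_zer[OF Q cmp_closed[OF E Q]] by simp
  have phi_chi: "cmp phi (cmp psi Q) = Q" using cmp_assoc[OF phi psi(1) Q] phi_psi_Q by simp
  show ?thesis
    unfolding inverse13_def Q_def[symmetric] P_def[symmetric]
    using cmp_closed[OF psi(1) Q] phi_chi Q_phi Q_sa by simp
qed

end

theorem lemma3p1:
  fixes hom :: "'o \<Rightarrow> 'o \<Rightarrow> 'm set"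
  assumes C: "additive_inv_cat hom cmp idm zer add neg star"
    and phi: "phi \<in> hom X Y"
    and ker: "is_kernel hom cmp zer phi X Y kappa K"
  shows "((\<exists>chi. inverse13 hom cmp star phi X Y chi) \<longleftrightarrow>
           (regular_mor hom cmp phi X Y \<and> invertible_mor hom cmp idm (cmp kappa (star kappa)) K K))
       \<and> ((\<exists>chi. inverse13 hom cmp star phi X Y chi) \<longrightarrow>
           (\<forall>psi g. psi \<in> hom Y X \<longrightarrow> cmp (cmp phi psi) phi = phi \<longrightarrow>
              g \<in> hom K K \<longrightarrow> cmp (cmp kappa (star kappa)) g = idm K \<longrightarrow> cmp g (cmp kappa (star kappa)) = idm K \<longrightarrow>
              inverse13 hom cmp star phi X Y
                (cmp psi (add (idm X) (neg (cmp (cmp (star kappa) g) kappa))))))"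
proof -
  interpret additive_inv_cat hom cmp idm zer add neg star by (fact C)
  have regular: "regular_mor hom cmp phi X Y" if "inverse13 hom cmp star phi X Y chi" for chi
    using that unfolding inverse13_def regular_mor_def by blast
  note necessity = invertible_kernel_gram_if_inverse13[OF phi ker]
  note sufficiency = inverse13_from_regular_inverse[OF phi ker]
  show ?thesis
    using regular necessity sufficiency unfolding regular_mor_def invertible_mor_def by blast
qed

end
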